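(* Let $X$ be a polyhedral normed space and $f: X\to X$ nonexpansive and real analytic. If $E\subseteq B_{X^*}$ is a minimal locked set for $f$, then $S_E(f)=x+L_E$ for every $x\in S_E(f)$.
   Context: A polyhedral normed space is a finite-dimensional real normed space whose closed unit ball has finitely many extreme points; $B_{X^*}$ is the closed unit ball of the dual space. Nonexpansive: $\|f(x)-f(y)\|\le\|x-y\|$ for all $x,y$. Real analytic: locally given by a convergent power series. The duality map is $J(x)=\{\phi\in B_{X^*}: \phi(x)=\|x\|\}$. For $E\subseteq B_{X^*}$: $S_E(f)=\{x\in X: \phi(f(x))=\phi(x)\text{ for all }\phi\in E\}$ and $L_E=\{x\in X: \phi(x)=\psi(x)\text{ for all }\phi,\psi\in E\}$. A set $E\subseteq B_{X^*}$ is locked (for $f$) if there exist $v,w\in S_E(f)$ with $J(v-w)=E$; a locked set is minimal if no proper subset of it is locked. *)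

theory Defs
  imports "HOL-Analysis.Analysis"
begin

text \<open>The finite-dimensional real space X is modelled as a type of class euclidean_space
  (used only for its linear and topological structure) equipped with an arbitrary norm N.\<close>

definition is_norm :: "('a::real_vector \<Rightarrow> real) \<Rightarrow> bool" where
  "is_norm N \<longleftrightarrow> (\<forall>x. N x = 0 \<longleftrightarrow> x = 0) \<and> (\<forall>x y. N (x + y) \<le> N x + N y)
     \<and> (\<forall>c x. N (c *\<^sub>R x) = \<bar>c\<bar> * N x)"

definition polyhedral_norm :: "('a::euclidean_space \<Rightarrow> real) \<Rightarrow> bool" where
  "polyhedral_norm N \<longleftrightarrow> is_norm N \<and> finite {x. x extreme_point_of {y. N y \<le> 1}}"

definition dual_ball :: "('a::euclidean_space \<Rightarrow> real) \<Rightarrow> ('a \<Rightarrow> real) set" where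
  "dual_ball N = {\<phi>. linear \<phi> \<and> (\<forall>x. \<bar>\<phi> x\<bar> \<le> N x)}"

definition nonexpansive :: "('a::euclidean_space \<Rightarrow> real) \<Rightarrow> ('a \<Rightarrow> 'a) \<Rightarrow> bool" where
  "nonexpansive N f \<longleftrightarrow> (\<forall>x y. N (f x - f y) \<le> N (x - y))"

definition real_analytic_on :: "('a::euclidean_space \<Rightarrow> 'b::real_normed_vector) \<Rightarrow> 'a set \<Rightarrow> bool" where
  "real_analytic_on f S \<longleftrightarrow> (\<forall>x0\<in>S. \<exists>r>0. \<exists>c::('a \<Rightarrow> nat) \<Rightarrow> 'b. \<forall>y\<in>ball x0 r.
      ((\<lambda>\<alpha>. (\<Prod>b\<in>Basis. ((y - x0) \<bullet> b) ^ \<alpha> b) *\<^sub>R c \<alpha>) has_sum f y)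
        {\<alpha>. \<forall>i. i \<notin> Basis \<longrightarrow> \<alpha> i = 0})"

definition duality_map :: "('a::euclidean_space \<Rightarrow> real) \<Rightarrow> 'a \<Rightarrow> ('a \<Rightarrow> real) set" where
  "duality_map N x = {\<phi> \<in> dual_ball N. \<phi> x = N x}"

definition S_set :: "('a \<Rightarrow> real) set \<Rightarrow> ('a \<Rightarrow> 'a) \<Rightarrow> 'a set" where
  "S_set E f = {x. \<forall>\<phi>\<in>E. \<phi> (f x) = \<phi> x}"

definition L_set :: "('a \<Rightarrow> real) set \<Rightarrow> 'a set" where
  "L_set E = {x. \<forall>\<phi>\<in>E. \<forall>\<psi>\<in>E. \<phi> x = \<psi> x}"

definition locked :: "('a::euclidean_space \<Rightarrow> real) \<Rightarrow> ('a \<Rightarrow> 'a) \<Rightarrow> ('a \<Rightarrow> real) set \<Rightarrow> bool" where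
  "locked N f E \<longleftrightarrow> E \<subseteq> dual_ball N \<and>
     (\<exists>v w. v \<in> S_set E f \<and> w \<in> S_set E f \<and> duality_map N (v - w) = E)"

definition minimal_locked :: "('a::euclidean_space \<Rightarrow> real) \<Rightarrow> ('a \<Rightarrow> 'a) \<Rightarrow> ('a \<Rightarrow> real) set \<Rightarrow> bool" where
  "minimal_locked N f E \<longleftrightarrow> locked N f E \<and> (\<forall>E'. E' \<subset> E \<longrightarrow> \<not> locked N f E')"

end

theory Submission
  imports Defs "HOL-Complex_Analysis.Conformal_Mappings"
begin

text \<open>Write \<open>J\<close> for the duality map and \<open>u = v - w\<close> for a locking pair \<open>v, w\<close> with \<open>J u = E\<close>.
  Because the norm is the maximum of finitely many functionals, \<open>J\<close> is locally constant
  in the directions of \<open>L\<^sub>E\<close>: \<open>E \<subseteq> J (a u + h)\<close> for small \<open>h \<in> L\<^sub>E\<close>. Nonexpansiveness then pins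
  \<open>\<phi> (f x) = \<phi> x\<close> (\<open>\<phi> \<in> E\<close>) on a neighbourhood of the open segment between \<open>w\<close> and \<open>v\<close> inside
  \<open>w + L\<^sub>E\<close>, and analyticity of \<open>f\<close> along lines spreads this identity to all of \<open>w + L\<^sub>E\<close>.
  Conversely, if \<open>x \<in> S\<^sub>E\<close> but \<open>w - x \<notin> L\<^sub>E\<close>, then for large \<open>t\<close> the pair \<open>w + t u, x\<close>
  locks the set \<open>J (t u + w - x)\<close>, which is a proper subset of \<open>E\<close>, contradicting minimality.\<close>

context
  fixes N :: "'a::real_vector \<Rightarrow> real"
  assumes N: "is_norm N"
begin

lemma is_norm_triangle: "N (x + y) \<le> N x + N y"
  using N unfolding is_norm_def by blast

lemma is_norm_scaleR: "N (c *\<^sub>R x) = \<bar>c\<bar> * N x"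
  using N unfolding is_norm_def by blast

lemma is_norm_eq_0_iff: "N x = 0 \<longleftrightarrow> x = 0"
  using N unfolding is_norm_def by blast

lemma is_norm_zero: "N 0 = 0"
  by (simp add: is_norm_eq_0_iff)

lemma is_norm_minus: "N (- x) = N x"
  using is_norm_scaleR[of "-1" x] by simp

lemma is_norm_nonneg: "N x \<ge> 0"
  using is_norm_triangle[of x "- x"] by (simp add: is_norm_zero is_norm_minus)

lemma is_norm_pos: "x \<noteq> 0 \<Longrightarrow> N x > 0"
  using is_norm_nonneg[of x] is_norm_eq_0_iff[of x] by linarith

lemma is_norm_sum: "N (sum g A) \<le> (\<Sum>a\<in>A. N (g a))"
proof (induction A rule: infinite_finite_induct)
  case (insert a A)
  then show ?case using is_norm_triangle[of "g a" "sum g A"] by simp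
qed (simp_all add: is_norm_zero)

lemma is_norm_unit_ball_convex: "convex {y. N y \<le> 1}"
  unfolding convex_def
proof clarsimp
  fix x y :: 'a and u v :: real
  assume "N x \<le> 1" "N y \<le> 1" "0 \<le> u" "0 \<le> v" "u + v = 1"
  have "N (u *\<^sub>R x + v *\<^sub>R y) \<le> u * N x + v * N y"
    using is_norm_triangle[of "u *\<^sub>R x" "v *\<^sub>R y"] \<open>0 \<le> u\<close> \<open>0 \<le> v\<close>
    by (simp add: is_norm_scaleR)
  also have "\<dots> \<le> u * 1 + v * 1"
    using \<open>N x \<le> 1\<close> \<open>N y \<le> 1\<close> \<open>0 \<le> u\<close> \<open>0 \<le> v\<close> by (intro add_mono mult_left_mono)
  finally show "N (u *\<^sub>R x + v *\<^sub>R y) \<le> 1" using \<open>u + v = 1\<close> by simp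
qed

end

context
  fixes N :: "'a::euclidean_space \<Rightarrow> real"
  assumes N: "is_norm N"
begin

lemma is_norm_le_norm: "\<exists>C>0. \<forall>x. N x \<le> C * norm x"
proof -
  define C where "C = (\<Sum>b\<in>Basis. N b) + 1"
  have "C > 0" unfolding C_def by (simp add: sum_nonneg add_nonneg_pos is_norm_nonneg[OF N])
  moreover have "N x \<le> C * norm x" for x
  proof -
    have "N x = N (\<Sum>b\<in>Basis. (x \<bullet> b) *\<^sub>R b)" by (simp add: euclidean_representation)
    also have "\<dots> \<le> (\<Sum>b\<in>Basis. N ((x \<bullet> b) *\<^sub>R b))" by (rule is_norm_sum[OF N])
    also have "\<dots> = (\<Sum>b\<in>Basis. \<bar>x \<bullet> b\<bar> * N b)" by (simp add: is_norm_scaleR[OF N])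
    also have "\<dots> \<le> (\<Sum>b\<in>Basis. norm x * N b)"
      by (rule sum_mono) (simp add: Basis_le_norm mult_right_mono is_norm_nonneg[OF N])
    also have "\<dots> \<le> C * norm x" unfolding C_def by (simp add: sum_distrib_left algebra_simps)
    finally show ?thesis .
  qed
  ultimately show ?thesis by blast
qed

lemma is_norm_continuous_on: "continuous_on S N"
proof -
  obtain C where C: "C > 0" "\<And>x. N x \<le> C * norm x" using is_norm_le_norm by blast
  have "\<bar>N x - N y\<bar> \<le> C * dist x y" for x y
    using is_norm_triangle[OF N, of y "x - y"] is_norm_triangle[OF N, of x "y - x"]
      C(2)[of "x - y"] C(2)[of "y - x"] by (simp add: dist_norm norm_minus_commute)
  then have "C-lipschitz_on S N"
    using C(1) by (intro lipschitz_onI) (auto simp: dist_real_def)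
  then show ?thesis by (rule lipschitz_on_continuous_on)
qed

lemma is_norm_ge_norm: "\<exists>m>0. \<forall>x. m * norm x \<le> N x"
proof -
  obtain b :: 'a where "b \<in> Basis" using nonempty_Basis by blast
  then have "sphere (0::'a) 1 \<noteq> {}" by (auto intro!: exI[of _ b])
  then obtain x0 where x0: "x0 \<in> sphere 0 1" "\<And>y. y \<in> sphere 0 1 \<Longrightarrow> N x0 \<le> N y"
    using continuous_attains_inf[OF compact_sphere _ is_norm_continuous_on] by blast
  have "N x0 * norm x \<le> N x" for x
  proof (cases "x = 0")
    case False
    then have "N x0 \<le> N ((1 / norm x) *\<^sub>R x)" using x0(2) by simp
    then show ?thesis using False by (simp add: is_norm_scaleR[OF N] field_simps)
  qed (simp add: is_norm_zero[OF N])
  moreover have "N x0 > 0" using x0(1) by (intro is_norm_pos[OF N]) auto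
  ultimately show ?thesis by blast
qed

lemma is_norm_unit_ball_compact: "compact {y. N y \<le> 1}"
proof -
  obtain m where m: "m > 0" "\<And>x. m * norm x \<le> N x" using is_norm_ge_norm by blast
  have "{y. N y \<le> 1} \<subseteq> cball 0 (1/m)"
  proof
    fix y assume "y \<in> {y. N y \<le> 1}"
    then have "m * norm y \<le> 1" using m(2)[of y] by simp
    then show "y \<in> cball 0 (1/m)" using m(1) by (simp add: field_simps)
  qed
  then have "bounded {y. N y \<le> 1}" using bounded_cball bounded_subset by blast
  moreover have "closed {y. N y \<le> 1}"
    by (rule closed_Collect_le[OF is_norm_continuous_on continuous_on_const])
  ultimately show ?thesis using compact_eq_bounded_closed by blast
qed

end

lemma polyhedral_norm_unit_ball_polyhedron:
  assumes "polyhedral_norm N"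
  shows "polyhedron {y. N y \<le> 1}"
proof -
  have N: "is_norm N" and "finite {x. x extreme_point_of {y. N y \<le> 1}}"
    using assms unfolding polyhedral_norm_def by auto
  moreover have "{y. N y \<le> 1} = convex hull {x. x extreme_point_of {y. N y \<le> 1}}"
    by (rule Krein_Milman_Minkowski[OF is_norm_unit_ball_compact[OF N] is_norm_unit_ball_convex[OF N]])
  ultimately have "polytope {y. N y \<le> 1}" unfolding polytope_def by blast
  then show ?thesis by (rule polytope_imp_polyhedron)
qed

lemma dual_ball_linear: "\<phi> \<in> dual_ball N \<Longrightarrow> linear \<phi>"
  and dual_ball_le: "\<phi> \<in> dual_ball N \<Longrightarrow> \<phi> x \<le> N x"
  and dual_ball_abs_le: "\<phi> \<in> dual_ball N \<Longrightarrow> \<bar>\<phi> x\<bar> \<le> N x"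
  unfolding dual_ball_def by (auto simp: abs_le_iff)

lemma unit_ball_halfspace_functional:
  fixes N :: "'a::euclidean_space \<Rightarrow> real"
  assumes N: "is_norm N" and "a \<noteq> 0" and sub: "{y. N y \<le> 1} \<subseteq> {x. a \<bullet> x \<le> b}"
  shows "b > 0" and "(\<lambda>x. (a \<bullet> x) / b) \<in> dual_ball N"
proof -
  obtain C where C: "C > 0" "\<And>x. N x \<le> C * norm x" using is_norm_le_norm[OF N] by blast
  define x where "x = (1 / (C * norm a)) *\<^sub>R a"
  have "N x \<le> 1" using C \<open>a \<noteq> 0\<close> C(2)[of x] by (simp add: x_def)
  then have "a \<bullet> x \<le> b" using sub by blast
  moreover have "a \<bullet> x = norm a / C"
    using \<open>a \<noteq> 0\<close> by (simp add: x_def power2_norm_eq_inner[symmetric] power2_eq_square)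
  ultimately show b: "b > 0" using C(1) \<open>a \<noteq> 0\<close> by (smt (verit) divide_pos_pos zero_less_norm_iff)
  have le: "a \<bullet> y \<le> b * N y" for y
  proof (cases "y = 0")
    case False
    then have "N ((1 / N y) *\<^sub>R y) \<le> 1" using is_norm_pos[OF N, of y] by (simp add: is_norm_scaleR[OF N])
    then have "a \<bullet> ((1 / N y) *\<^sub>R y) \<le> b" using sub by blast
    then show ?thesis using is_norm_pos[OF N False] by (simp add: field_simps)
  qed (simp add: is_norm_zero[OF N])
  have "\<bar>a \<bullet> y\<bar> / b \<le> N y" for y
    using le[of y] le[of "- y"] b by (simp add: is_norm_minus[OF N] field_simps)
  moreover have "linear (\<lambda>x. (a \<bullet> x) / b)"
    by (rule linearI) (auto simp: inner_add_right add_divide_distrib)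
  ultimately show "(\<lambda>x. (a \<bullet> x) / b) \<in> dual_ball N" unfolding dual_ball_def using b by simp
qed

lemma unit_ball_Inter_attains_norm:
  fixes N :: "'a::euclidean_space \<Rightarrow> real"
  assumes N: "is_norm N" and "finite \<Psi>" "\<Psi> \<noteq> {}" "\<Psi> \<subseteq> dual_ball N"
    and ball: "{y. N y \<le> 1} = {y. \<forall>\<psi>\<in>\<Psi>. \<psi> y \<le> 1}"
  shows "\<exists>\<psi>\<in>\<Psi>. \<psi> x = N x"
proof (rule ccontr)
  assume none: "\<not> ?thesis"
  have lt: "\<psi> x < N x" if "\<psi> \<in> \<Psi>" for \<psi>
    using dual_ball_le[of \<psi> N x] none that assms(4) by force
  then have "x \<noteq> 0"
    using \<open>\<Psi> \<noteq> {}\<close> assms(4) by (force simp: linear_0[OF dual_ball_linear] is_norm_zero[OF N])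
  then have Nx: "N x > 0" by (rule is_norm_pos[OF N])
  define s where "s = Max (insert (N x / 2) ((\<lambda>\<psi>. \<psi> x) ` \<Psi>))"
  have fin: "finite (insert (N x / 2) ((\<lambda>\<psi>. \<psi> x) ` \<Psi>))" using assms(2) by simp
  have s_lt: "s < N x" unfolding s_def using fin lt Nx by (subst Max_less_iff) auto
  have s_ge: "N x / 2 \<le> s" unfolding s_def using fin by (rule Max_ge) simp
  have "\<psi> ((1 / s) *\<^sub>R x) \<le> 1" if "\<psi> \<in> \<Psi>" for \<psi>
  proof -
    have "\<psi> x \<le> s" unfolding s_def using fin that by (intro Max_ge) auto
    then show ?thesis
      using s_ge Nx that assms(4) by (auto simp: linear_scale[OF dual_ball_linear] field_simps)
  qed
  then have "N ((1 / s) *\<^sub>R x) \<le> 1" using ball by blast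
  then show False using s_lt s_ge Nx by (simp add: is_norm_scaleR[OF N] field_simps)
qed

lemma polyhedral_norm_finite_max:
  fixes N :: "'a::euclidean_space \<Rightarrow> real"
  assumes P: "polyhedral_norm N"
  obtains \<Psi> where "finite \<Psi>" "\<Psi> \<subseteq> dual_ball N" "\<And>x. \<exists>\<psi>\<in>\<Psi>. \<psi> x = N x"
proof -
  have N: "is_norm N" using P unfolding polyhedral_norm_def by blast
  obtain F where F: "finite F" "{y. N y \<le> 1} = \<Inter>F" "\<forall>h\<in>F. \<exists>a b. a \<noteq> 0 \<and> h = {x. a \<bullet> x \<le> b}"
    using polyhedral_norm_unit_ball_polyhedron[OF P] unfolding polyhedron_def by blast
  then obtain a b where ab: "\<And>h. h \<in> F \<Longrightarrow> a h \<noteq> 0 \<and> h = {x. a h \<bullet> x \<le> b h}"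
    by metis
  have sub: "{y. N y \<le> 1} \<subseteq> {x. a h \<bullet> x \<le> b h}" if "h \<in> F" for h
    using F(2) ab[OF that] that by blast
  define \<psi> where "\<psi> h x = (a h \<bullet> x) / b h" for h x
  have \<psi>: "\<psi> h \<in> dual_ball N" if "h \<in> F" for h
    unfolding \<psi>_def using unit_ball_halfspace_functional(2)[OF N _ sub] ab that by blast
  have "y \<in> h \<longleftrightarrow> \<psi> h y \<le> 1" if "h \<in> F" for h y
  proof -
    have "b h > 0" using unit_ball_halfspace_functional(1)[OF N _ sub[OF that]] ab[OF that] by blast
    then show ?thesis using ab[OF that] by (auto simp: \<psi>_def divide_le_eq_1)
  qed
  then have "{y. N y \<le> 1} = {y. \<forall>\<psi>'\<in>\<psi> ` F. \<psi>' y \<le> 1}" using F(2) by blast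
  moreover have "F \<noteq> {}"
    using F(2) is_norm_unit_ball_compact[OF N] compact_imp_bounded not_bounded_UNIV by force
  ultimately show ?thesis
    using that[of "\<psi> ` F"] unit_ball_Inter_attains_norm[OF N, of "\<psi> ` F"] F(1) \<psi> by blast
qed

lemma duality_map_subset_dual_ball: "duality_map N y \<subseteq> dual_ball N"
  unfolding duality_map_def by auto

lemma duality_map_scaleR:
  assumes "is_norm N" "a > 0"
  shows "duality_map N (a *\<^sub>R y) = duality_map N y"
proof -
  have "\<phi> (a *\<^sub>R y) = N (a *\<^sub>R y) \<longleftrightarrow> \<phi> y = N y" if "\<phi> \<in> dual_ball N" for \<phi>
    using linear_scale[OF dual_ball_linear[OF that]] is_norm_scaleR[OF assms(1)] assms(2) by simp
  then show ?thesis unfolding duality_map_def by blast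
qed

lemma subspace_L_set:
  assumes "E \<subseteq> dual_ball N"
  shows "subspace (L_set E)"
proof -
  have lin: "linear \<phi>" if "\<phi> \<in> E" for \<phi> using assms that dual_ball_linear by blast
  show ?thesis
    unfolding subspace_def L_set_def
    by (simp add: linear_0[OF lin] linear_add[OF lin] linear_scale[OF lin]) metis
qed

lemma L_set_duality_map: "x \<in> L_set (duality_map N x)"
  unfolding L_set_def duality_map_def by simp

lemma subspace_L_set_duality_map: "subspace (L_set (duality_map N x))"
  by (rule subspace_L_set[OF duality_map_subset_dual_ball])

lemma nonexpansive_duality_map_le:
  assumes "nonexpansive N f" "\<phi> \<in> duality_map N (x - y)"
  shows "\<phi> (f x) - \<phi> (f y) \<le> \<phi> x - \<phi> y"
proof -
  have \<phi>: "\<phi> \<in> dual_ball N" "\<phi> (x - y) = N (x - y)"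
    using assms(2) unfolding duality_map_def by auto
  have "\<phi> (f x - f y) \<le> N (f x - f y)" by (rule dual_ball_le[OF \<phi>(1)])
  also have "\<dots> \<le> N (x - y)" using assms(1) unfolding nonexpansive_def by blast
  finally show ?thesis using \<phi> by (simp add: linear_diff[OF dual_ball_linear])
qed

lemma duality_map_not_subset_shift:
  assumes "d \<notin> L_set (duality_map N u)"
  shows "\<not> duality_map N u \<subseteq> duality_map N (t *\<^sub>R u + d)"
proof
  assume sub: "duality_map N u \<subseteq> duality_map N (t *\<^sub>R u + d)"
  obtain \<phi>1 \<phi>2 where \<phi>: "\<phi>1 \<in> duality_map N u" "\<phi>2 \<in> duality_map N u" "\<phi>1 d < \<phi>2 d"
  proof -
    obtain \<phi> \<psi> where "\<phi> \<in> duality_map N u" "\<psi> \<in> duality_map N u" "\<phi> d \<noteq> \<psi> d"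
      using assms unfolding L_set_def by blast
    then show ?thesis using that by (cases "\<phi> d < \<psi> d") auto
  qed
  have db: "\<phi>1 \<in> dual_ball N" "\<phi>2 \<in> dual_ball N" "\<phi>1 u = \<phi>2 u"
    using \<phi>(1,2) unfolding duality_map_def by auto
  have "\<phi>1 (t *\<^sub>R u + d) < \<phi>2 (t *\<^sub>R u + d)"
    using \<phi>(3) db by (simp add: linear_add[OF dual_ball_linear] linear_scale[OF dual_ball_linear])
  also have "\<dots> \<le> N (t *\<^sub>R u + d)" by (rule dual_ball_le[OF db(2)])
  finally show False using sub \<phi>(1) unfolding duality_map_def by auto
qed

locale finite_max_norm =
  fixes N :: "'a::euclidean_space \<Rightarrow> real" and \<Psi> :: "('a \<Rightarrow> real) set"
  assumes is_norm: "is_norm N" and finite: "finite \<Psi>" and subset_dual_ball: "\<Psi> \<subseteq> dual_ball N"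
    and attains_norm: "\<And>x. \<exists>\<psi>\<in>\<Psi>. \<psi> x = N x"
begin

lemma norming_gap: "\<exists>g>0. \<forall>\<psi>\<in>\<Psi>. \<psi> u \<noteq> N u \<longrightarrow> \<psi> u \<le> N u - g"
proof -
  define G where "G = insert 1 ((\<lambda>\<psi>. N u - \<psi> u) ` {\<psi>\<in>\<Psi>. \<psi> u \<noteq> N u})"
  have "finite G" using finite unfolding G_def by simp
  moreover have "\<forall>g\<in>G. g > 0"
    unfolding G_def using subset_dual_ball dual_ball_le by (force simp: less_le)
  ultimately have "Min G > 0" using Min_gr_iff[of G 0] unfolding G_def by blast
  moreover have "\<psi> u \<le> N u - Min G" if "\<psi> \<in> \<Psi>" "\<psi> u \<noteq> N u" for \<psi>
    using Min_le[OF \<open>finite G\<close>, of "N u - \<psi> u"] that unfolding G_def by auto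
  ultimately show ?thesis by blast
qed

text \<open>Only the functionals of \<open>\<Psi>\<close> that norm \<open>u\<close> can norm a nearby point, and along \<open>L\<^sub>J\<^sub>u\<close> all
  of \<open>J u\<close> moves together.\<close>

lemma duality_map_subset_perturb:
  "\<exists>\<delta>>0. \<forall>h\<in>L_set (duality_map N u). norm h < \<delta> \<longrightarrow> duality_map N u \<subseteq> duality_map N (u + h)"
proof -
  obtain g where g: "g > 0" "\<And>\<psi>. \<psi> \<in> \<Psi> \<Longrightarrow> \<psi> u \<noteq> N u \<Longrightarrow> \<psi> u \<le> N u - g"
    using norming_gap by blast
  obtain C where C: "C > 0" "\<And>x. N x \<le> C * norm x" using is_norm_le_norm[OF is_norm] by blast
  have "duality_map N u \<subseteq> duality_map N (u + h)"
    if h: "h \<in> L_set (duality_map N u)" "norm h < g / (2 * C)" for h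
  proof -
    have "N h \<le> C * norm h" by (rule C(2))
    also have "\<dots> < g / 2" using h(2) C(1) by (simp add: field_simps)
    finally have Nh: "N h < g / 2" .
    obtain \<psi>0 where \<psi>0: "\<psi>0 \<in> \<Psi>" "\<psi>0 (u + h) = N (u + h)" using attains_norm by blast
    obtain \<psi>1 where \<psi>1: "\<psi>1 \<in> \<Psi>" "\<psi>1 u = N u" using attains_norm by blast
    have db: "\<psi>0 \<in> dual_ball N" "\<psi>1 \<in> dual_ball N" using \<psi>0(1) \<psi>1(1) subset_dual_ball by auto
    have "\<psi>0 u = N u"
    proof (rule ccontr)
      assume "\<psi>0 u \<noteq> N u"
      then have "N (u + h) \<le> N u - g + N h"
        using \<psi>0 g(2)[OF \<psi>0(1)] dual_ball_le[OF db(1), of h] by (simp add: linear_add[OF dual_ball_linear[OF db(1)]])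
      moreover have "N u + \<psi>1 h \<le> N (u + h)"
        using \<psi>1(2) dual_ball_le[OF db(2), of "u + h"] by (simp add: linear_add[OF dual_ball_linear[OF db(2)]])
      ultimately show False using Nh dual_ball_abs_le[OF db(2), of h] by linarith
    qed
    then have J0: "\<psi>0 \<in> duality_map N u" using db(1) unfolding duality_map_def by blast
    show ?thesis
    proof
      fix \<phi> assume \<phi>: "\<phi> \<in> duality_map N u"
      then have "\<phi> \<in> dual_ball N" "\<phi> u = \<psi>0 u" "\<phi> h = \<psi>0 h"
        using h(1) J0 \<open>\<psi>0 u = N u\<close> unfolding L_set_def duality_map_def by auto
      then show "\<phi> \<in> duality_map N (u + h)"
        using \<psi>0(2) db(1) by (simp add: duality_map_def linear_add[OF dual_ball_linear])
    qed
  qed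
  moreover have "g / (2 * C) > 0" using g(1) C(1) by simp
  ultimately show ?thesis by blast
qed

lemma duality_map_subset_perturb_scaled:
  obtains \<delta> where "\<delta> > 0" "\<And>h a. h \<in> L_set (duality_map N u) \<Longrightarrow> a > 0 \<Longrightarrow> norm h < a * \<delta>
     \<Longrightarrow> duality_map N u \<subseteq> duality_map N (a *\<^sub>R u + h)"
proof -
  obtain \<delta> where \<delta>: "\<delta> > 0" "\<And>h. h \<in> L_set (duality_map N u) \<Longrightarrow> norm h < \<delta> \<Longrightarrow>
      duality_map N u \<subseteq> duality_map N (u + h)" using duality_map_subset_perturb by blast
  have "duality_map N u \<subseteq> duality_map N (a *\<^sub>R u + h)"
    if "h \<in> L_set (duality_map N u)" "a > 0" "norm h < a * \<delta>" for h a
  proof -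
    have "(1/a) *\<^sub>R h \<in> L_set (duality_map N u)"
      using subspace_scale[OF subspace_L_set_duality_map that(1)] .
    moreover have "norm ((1/a) *\<^sub>R h) < \<delta>" using that(2,3) by (simp add: field_simps)
    ultimately have "duality_map N u \<subseteq> duality_map N (u + (1/a) *\<^sub>R h)" using \<delta>(2) by blast
    also have "\<dots> = duality_map N (a *\<^sub>R (u + (1/a) *\<^sub>R h))"
      using duality_map_scaleR[OF is_norm that(2)] by simp
    finally show ?thesis using that(2) by (simp add: scaleR_add_right)
  qed
  then show ?thesis using that \<delta>(1) by blast
qed

text \<open>For large \<open>s\<close> only the functionals norming \<open>u\<close> can norm \<open>s u + d\<close>; the constant \<open>M\<close> is the
  largest value at \<open>d\<close> among them.\<close>

lemma norm_eventually_affine: "\<exists>M t. \<forall>s\<ge>t. N (s *\<^sub>R u + d) = s * N u + M"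
proof -
  obtain g where g: "g > 0" "\<And>\<psi>. \<psi> \<in> \<Psi> \<Longrightarrow> \<psi> u \<noteq> N u \<Longrightarrow> \<psi> u \<le> N u - g"
    using norming_gap by blast
  define A where "A = {\<psi>\<in>\<Psi>. \<psi> u = N u}"
  have A: "finite A" "A \<noteq> {}" unfolding A_def using finite attains_norm[of u] by auto
  define M where "M = Max ((\<lambda>\<psi>. \<psi> d) ` A)"
  have "M \<in> (\<lambda>\<psi>. \<psi> d) ` A" unfolding M_def using A by (intro Max_in) auto
  then obtain \<psi>m where \<psi>m: "\<psi>m \<in> A" "\<psi>m d = M" by blast
  have M_ge: "\<psi> d \<le> M" if "\<psi> \<in> A" for \<psi> unfolding M_def using A that by (intro Max_ge) auto
  have \<psi>m_db: "\<psi>m \<in> dual_ball N" "\<psi>m u = N u" using \<psi>m(1) subset_dual_ball unfolding A_def by auto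
  have "N (s *\<^sub>R u + d) = s * N u + M" if s: "s \<ge> 2 * N d / g + 1" for s
  proof -
    have "0 \<le> 2 * N d / g" using g(1) is_norm_nonneg[OF is_norm, of d] by simp
    then have s_pos: "s > 0" using s by linarith
    have "s * g \<ge> (2 * N d / g + 1) * g" using s g(1) by (intro mult_right_mono) auto
    also have "(2 * N d / g + 1) * g = 2 * N d + g" using g(1) by (simp add: field_simps)
    finally have sg: "s * g \<ge> 2 * N d" using g(1) by simp
    have lin: "\<psi> (s *\<^sub>R u + d) = s * \<psi> u + \<psi> d" if "\<psi> \<in> dual_ball N" for \<psi>
      by (simp add: linear_add[OF dual_ball_linear[OF that]] linear_scale[OF dual_ball_linear[OF that]])
    have "s * N u + M \<le> N (s *\<^sub>R u + d)"
      using dual_ball_le[OF \<psi>m_db(1), of "s *\<^sub>R u + d"] lin[OF \<psi>m_db(1)] \<psi>m(2) \<psi>m_db(2) by simp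
    moreover obtain \<psi>0 where \<psi>0: "\<psi>0 \<in> \<Psi>" "\<psi>0 (s *\<^sub>R u + d) = N (s *\<^sub>R u + d)"
      using attains_norm by blast
    moreover have "\<psi>0 (s *\<^sub>R u + d) \<le> s * N u + M"
    proof -
      have db: "\<psi>0 \<in> dual_ball N" using \<psi>0(1) subset_dual_ball by blast
      show ?thesis
      proof (cases "\<psi>0 u = N u")
        case True
        then show ?thesis using M_ge[of \<psi>0] \<psi>0(1) lin[OF db] unfolding A_def by simp
      next
        case False
        have "s * \<psi>0 u \<le> s * N u - s * g"
          using mult_left_mono[OF g(2)[OF \<psi>0(1) False], of s] s_pos by (simp add: right_diff_distrib)
        moreover have "- N d \<le> M" using dual_ball_abs_le[OF \<psi>m_db(1), of d] \<psi>m(2) by linarith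
        ultimately show ?thesis using lin[OF db] dual_ball_le[OF db, of d] sg by linarith
      qed
    qed
    ultimately show ?thesis by linarith
  qed
  then show ?thesis by blast
qed

lemma duality_map_eventually_subset: "\<exists>t. duality_map N (t *\<^sub>R u + d) \<subseteq> duality_map N u"
proof -
  obtain M t where affine: "\<And>s. s \<ge> t \<Longrightarrow> N (s *\<^sub>R u + d) = s * N u + M"
    using norm_eventually_affine by blast
  have "\<phi> \<in> duality_map N u" if \<phi>: "\<phi> \<in> duality_map N ((t + 1) *\<^sub>R u + d)" for \<phi>
  proof -
    have db: "\<phi> \<in> dual_ball N" "\<phi> ((t + 1) *\<^sub>R u + d) = N ((t + 1) *\<^sub>R u + d)"
      using \<phi> unfolding duality_map_def by auto
    have lin: "\<phi> (s *\<^sub>R u + d) = s * \<phi> u + \<phi> d" for s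
      by (simp add: linear_add[OF dual_ball_linear[OF db(1)]] linear_scale[OF dual_ball_linear[OF db(1)]])
    have "\<phi> ((t + 2) *\<^sub>R u + d) \<le> N ((t + 2) *\<^sub>R u + d)" "\<phi> (t *\<^sub>R u + d) \<le> N (t *\<^sub>R u + d)"
      using dual_ball_le[OF db(1)] by auto
    then have "\<phi> u = N u"
      using db(2) affine[of t] affine[of "t + 1"] affine[of "t + 2"] lin[of t] lin[of "t + 1"] lin[of "t + 2"]
      by (simp add: algebra_simps)
    then show ?thesis using db(1) unfolding duality_map_def by blast
  qed
  then show ?thesis by blast
qed

end

definition locally_power_series :: "(real \<Rightarrow> real) \<Rightarrow> bool" where
  "locally_power_series h \<longleftrightarrow>
     (\<forall>r. \<exists>\<rho>>0. \<exists>a. \<forall>\<tau>. \<bar>\<tau>\<bar> < \<rho> \<longrightarrow> (\<lambda>n. a n * \<tau> ^ n) sums h (r + \<tau>))"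

lemma real_power_series_holomorphic_extension:
  fixes a :: "nat \<Rightarrow> real"
  assumes ser: "\<And>t. \<bar>t\<bar> < \<rho> \<Longrightarrow> (\<lambda>n. a n * t ^ n) sums g t"
  obtains F where "F holomorphic_on ball 0 \<rho>" "\<And>t. \<bar>t\<bar> < \<rho> \<Longrightarrow> F (of_real t) = of_real (g t)"
proof
  define c where "c n = complex_of_real (a n)" for n
  have sums: "(\<lambda>n. c n * (of_real t) ^ n) sums of_real (g t)" if "\<bar>t\<bar> < \<rho>" for t
  proof -
    have "(\<lambda>n. complex_of_real (a n * t ^ n)) sums of_real (g t)"
      using ser[OF that] by (rule sums_of_real)
    then show ?thesis by (simp add: c_def)
  qed
  have radius: "conv_radius c \<ge> ereal \<rho>"
  proof (rule conv_radius_geI_ex')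
    fix t assume "0 < t" "ereal t < ereal \<rho>"
    then have "\<bar>t\<bar> < \<rho>" by simp
    then show "summable (\<lambda>n. c n * of_real t ^ n)" using sums sums_summable by blast
  qed
  show "eval_fps (Abs_fps c) holomorphic_on ball 0 \<rho>"
  proof (rule holomorphic_on_eval_fps)
    show "ball 0 \<rho> \<subseteq> eball 0 (fps_conv_radius (Abs_fps c))"
      using ball_eball_mono[OF radius] unfolding fps_conv_radius_def by simp
  qed
  show "eval_fps (Abs_fps c) (of_real t) = of_real (g t)" if "\<bar>t\<bar> < \<rho>" for t
    unfolding eval_fps_def using sums_unique[OF sums[OF that]] by simp
qed

lemma power_series_vanishing_near:
  fixes a :: "nat \<Rightarrow> real" and h :: "real \<Rightarrow> real"
  assumes ser: "\<And>\<tau>. \<bar>\<tau>\<bar> < \<rho> \<Longrightarrow> (\<lambda>n. a n * \<tau> ^ n) sums h (r + \<tau>)"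
    and r1: "\<bar>r1 - r\<bar> < \<rho>" "\<epsilon>1 > 0" and zero: "\<And>s. \<bar>s - r1\<bar> < \<epsilon>1 \<Longrightarrow> h s = 0"
    and \<tau>: "\<bar>\<tau>\<bar> < \<rho>"
  shows "h (r + \<tau>) = 0"
proof -
  obtain F where hol: "F holomorphic_on ball 0 \<rho>"
    and F: "\<And>t. \<bar>t\<bar> < \<rho> \<Longrightarrow> F (of_real t) = of_real (h (r + t))"
    using real_power_series_holomorphic_extension[OF ser] by blast
  define \<epsilon> where "\<epsilon> = min \<epsilon>1 (\<rho> - \<bar>r1 - r\<bar>)"
  have "\<epsilon> > 0" unfolding \<epsilon>_def using r1 by simp
  define U where "U = complex_of_real ` {t. \<bar>t - (r1 - r)\<bar> < \<epsilon>}"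
  have "F (of_real \<tau>) = 0"
  proof (rule analytic_continuation[OF hol])
    show "open (ball (0::complex) \<rho>)" "connected (ball (0::complex) \<rho>)" by auto
    show "U \<subseteq> ball 0 \<rho>" unfolding U_def \<epsilon>_def by (auto simp: dist_norm)
    show "complex_of_real (r1 - r) \<in> ball 0 \<rho>" using r1 by (simp add: dist_norm flip: of_real_diff)
    show "complex_of_real \<tau> \<in> ball 0 \<rho>" using \<tau> by (simp add: dist_norm)
    show "complex_of_real (r1 - r) islimpt U"
    proof (subst islimpt_approachable, intro allI impI)
      fix e :: real assume "e > 0"
      define x where "x = complex_of_real (r1 - r + min e \<epsilon> / 2)"
      have "x \<in> U" unfolding x_def U_def using \<open>\<epsilon> > 0\<close> \<open>e > 0\<close> by (intro imageI) auto
      moreover have "x \<noteq> complex_of_real (r1 - r)" unfolding x_def using \<open>\<epsilon> > 0\<close> \<open>e > 0\<close> by simp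
      moreover have "dist x (complex_of_real (r1 - r)) < e" unfolding x_def using \<open>\<epsilon> > 0\<close> \<open>e > 0\<close>
        by (simp add: dist_norm flip: of_real_diff)
      ultimately show "\<exists>x'\<in>U. x' \<noteq> complex_of_real (r1 - r) \<and> dist x' (complex_of_real (r1 - r)) < e"
        by blast
    qed
    show "F z = 0" if "z \<in> U" for z
    proof -
      obtain t where t: "z = of_real t" "\<bar>t - (r1 - r)\<bar> < \<epsilon>" using \<open>z \<in> U\<close> unfolding U_def by blast
      have "\<bar>t\<bar> < \<rho>" using t(2) unfolding \<epsilon>_def by linarith
      moreover have "h (r + t) = 0" using zero[of "r + t"] t(2) unfolding \<epsilon>_def by (simp add: algebra_simps)
      ultimately show ?thesis using F t(1) by simp
    qed
  qed
  then show ?thesis using F[OF \<tau>] by simp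
qed

text \<open>The points near which \<open>h\<close> vanishes form a set that is open and, by the identity theorem,
  also closed in the connected line \<open>\<real>\<close>.\<close>

lemma locally_power_series_eq_0:
  assumes "locally_power_series h" and zero: "\<exists>\<epsilon>>0. \<forall>r. \<bar>r\<bar> < \<epsilon> \<longrightarrow> h r = 0"
  shows "h r = 0"
proof -
  define Z where "Z = {r. \<exists>\<epsilon>>0. \<forall>s. \<bar>s - r\<bar> < \<epsilon> \<longrightarrow> h s = 0}"
  have "open Z" unfolding open_dist
  proof
    fix x assume "x \<in> Z"
    then obtain \<epsilon> where \<epsilon>: "\<epsilon> > 0" "\<And>s. \<bar>s - x\<bar> < \<epsilon> \<Longrightarrow> h s = 0" unfolding Z_def by blast
    have "y \<in> Z" if "dist y x < \<epsilon>" for y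
      unfolding Z_def using that \<epsilon> by (intro CollectI exI[of _ "\<epsilon> - dist y x"]) (auto simp: dist_real_def)
    then show "\<exists>e>0. \<forall>y. dist y x < e \<longrightarrow> y \<in> Z" using \<epsilon>(1) by blast
  qed
  moreover have "open (- Z)" unfolding open_dist
  proof
    fix x assume "x \<in> - Z"
    obtain \<rho> a where \<rho>: "\<rho> > 0" "\<And>\<tau>. \<bar>\<tau>\<bar> < \<rho> \<Longrightarrow> (\<lambda>n. a n * \<tau> ^ n) sums h (x + \<tau>)"
      using assms(1) unfolding locally_power_series_def by blast
    have "y \<in> - Z" if "dist y x < \<rho>" for y
    proof
      assume "y \<in> Z"
      then obtain \<epsilon> where \<epsilon>: "\<epsilon> > 0" "\<And>s. \<bar>s - y\<bar> < \<epsilon> \<Longrightarrow> h s = 0" unfolding Z_def by blast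
      have "\<bar>y - x\<bar> < \<rho>" using \<open>dist y x < \<rho>\<close> by (simp add: dist_real_def)
      have "h s = 0" if "\<bar>s - x\<bar> < \<rho>" for s
        using power_series_vanishing_near[OF \<rho>(2) \<open>\<bar>y - x\<bar> < \<rho>\<close> \<epsilon> that] by simp
      then have "x \<in> Z" unfolding Z_def using \<rho>(1) by blast
      then show False using \<open>x \<in> - Z\<close> by blast
    qed
    then show "\<exists>e>0. \<forall>y. dist y x < e \<longrightarrow> y \<in> - Z" using \<rho>(1) by blast
  qed
  moreover have "0 \<in> Z" using zero unfolding Z_def by simp
  ultimately have "Z = UNIV" using connectedD[OF connected_UNIV] by blast
  then obtain \<epsilon> where "\<epsilon> > 0" "\<And>s. \<bar>s - r\<bar> < \<epsilon> \<Longrightarrow> h s = 0" unfolding Z_def by blast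
  then show ?thesis by simp
qed

lemma locally_power_series_diff:
  assumes "locally_power_series g" "locally_power_series h"
  shows "locally_power_series (\<lambda>r. g r - h r)"
  unfolding locally_power_series_def
proof
  fix r
  obtain \<rho>1 a where a: "\<rho>1 > 0" "\<And>\<tau>. \<bar>\<tau>\<bar> < \<rho>1 \<Longrightarrow> (\<lambda>n. a n * \<tau> ^ n) sums g (r + \<tau>)"
    using assms(1) unfolding locally_power_series_def by blast
  obtain \<rho>2 b where b: "\<rho>2 > 0" "\<And>\<tau>. \<bar>\<tau>\<bar> < \<rho>2 \<Longrightarrow> (\<lambda>n. b n * \<tau> ^ n) sums h (r + \<tau>)"
    using assms(2) unfolding locally_power_series_def by blast
  have "(\<lambda>n. (a n - b n) * \<tau> ^ n) sums (g (r + \<tau>) - h (r + \<tau>))" if "\<bar>\<tau>\<bar> < min \<rho>1 \<rho>2" for \<tau>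
    using sums_diff[OF a(2) b(2)] that by (simp add: left_diff_distrib)
  then show "\<exists>\<rho>>0. \<exists>c. \<forall>\<tau>. \<bar>\<tau>\<bar> < \<rho> \<longrightarrow> (\<lambda>n. c n * \<tau> ^ n) sums (g (r + \<tau>) - h (r + \<tau>))"
    using a(1) b(1) by (intro exI[of _ "min \<rho>1 \<rho>2"] conjI exI[of _ "\<lambda>n. a n - b n"]) auto
qed

lemma locally_power_series_linear_line:
  assumes "linear \<phi>"
  shows "locally_power_series (\<lambda>r. \<phi> (p + r *\<^sub>R z))"
  unfolding locally_power_series_def
proof (intro allI exI conjI)
  fix r \<tau> :: real
  define a where "a n = (if n = 0 then \<phi> (p + r *\<^sub>R z) else if n = 1 then \<phi> z else 0)" for n :: nat
  have "(\<lambda>n. a n * \<tau> ^ n) sums (\<Sum>n\<in>{0, 1}. a n * \<tau> ^ n)"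
    by (rule sums_finite) (auto simp: a_def)
  also have "(\<Sum>n\<in>{0::nat, 1}. a n * \<tau> ^ n) = \<phi> (p + (r + \<tau>) *\<^sub>R z)"
    using linear_add[OF assms] linear_scale[OF assms] by (simp add: a_def scaleR_add_left algebra_simps)
  finally show "\<bar>\<tau>\<bar> < 1 \<longrightarrow> (\<lambda>n. a n * \<tau> ^ n) sums \<phi> (p + (r + \<tau>) *\<^sub>R z)" by blast
qed simp

lemma has_sum_graded_power_series:
  fixes deg :: "'i \<Rightarrow> nat" and \<kappa> :: "'i \<Rightarrow> real"
  assumes "\<rho> > 0" and hs: "\<And>\<tau>. \<bar>\<tau>\<bar> < \<rho> \<Longrightarrow> ((\<lambda>\<alpha>. \<tau> ^ deg \<alpha> * \<kappa> \<alpha>) has_sum S \<tau>) D"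
  shows "\<exists>a. \<forall>\<tau>. \<bar>\<tau>\<bar> < \<rho> \<longrightarrow> (\<lambda>n. a n * \<tau> ^ n) sums S \<tau>"
proof -
  define Dn where "Dn n = {\<alpha>\<in>D. deg \<alpha> = n}" for n
  define t1 where "t1 = \<rho> / 2"
  have t1: "\<bar>t1\<bar> < \<rho>" "t1 \<noteq> 0" unfolding t1_def using \<open>\<rho> > 0\<close> by auto
  have summable_Dn: "\<kappa> summable_on Dn n" for n
  proof -
    have "(\<lambda>\<alpha>. t1 ^ deg \<alpha> * \<kappa> \<alpha>) summable_on Dn n"
    proof (rule summable_on_subset_banach)
      show "(\<lambda>\<alpha>. t1 ^ deg \<alpha> * \<kappa> \<alpha>) summable_on D" using hs[OF t1(1)] by (rule has_sum_imp_summable)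
      show "Dn n \<subseteq> D" unfolding Dn_def by auto
    qed
    then have "(\<lambda>\<alpha>. t1 ^ n * \<kappa> \<alpha>) summable_on Dn n"
      by (rule summable_on_cong[THEN iffD1, rotated]) (simp add: Dn_def)
    moreover have "t1 ^ n \<noteq> 0" using t1(2) by simp
    ultimately show ?thesis using summable_on_cmult_right'[of "t1 ^ n" \<kappa> "Dn n"] by blast
  qed
  define a where "a n = infsum \<kappa> (Dn n)" for n
  have "(\<lambda>n. a n * \<tau> ^ n) sums S \<tau>" if "\<bar>\<tau>\<bar> < \<rho>" for \<tau>
  proof -
    define G where "G = (\<lambda>(n::nat, \<alpha>). \<tau> ^ n * \<kappa> \<alpha>)"
    have inj: "inj_on (\<lambda>\<alpha>. (deg \<alpha>, \<alpha>)) D" by (auto intro: inj_onI)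
    have img: "(\<lambda>\<alpha>. (deg \<alpha>, \<alpha>)) ` D = Sigma UNIV Dn" unfolding Dn_def by auto
    have "((G \<circ> (\<lambda>\<alpha>. (deg \<alpha>, \<alpha>))) has_sum S \<tau>) D"
      using hs[OF that] by (simp add: G_def o_def)
    then have "(G has_sum S \<tau>) (Sigma UNIV Dn)"
      using has_sum_reindex[OF inj] img by metis
    then have "((\<lambda>n. \<tau> ^ n * a n) has_sum S \<tau>) UNIV"
    proof (rule has_sum_Sigma')
      fix n :: nat
      show "((\<lambda>y. G (n, y)) has_sum \<tau> ^ n * a n) (Dn n)"
        unfolding G_def a_def using has_sum_cmult_right[OF has_sum_infsum[OF summable_Dn]] by simp
    qed
    then show ?thesis by (simp add: mult.commute has_sum_imp_sums)
  qed
  then show ?thesis by blast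
qed

text \<open>Along a line the multivariate series of \<open>f\<close> becomes a one-variable series after grouping
  the multi-indices \<open>\<alpha>\<close> by their total degree.\<close>

lemma real_analytic_on_line:
  fixes f :: "'a::euclidean_space \<Rightarrow> 'b::euclidean_space" and \<phi> :: "'b \<Rightarrow> real"
  assumes "real_analytic_on f UNIV" and "linear \<phi>"
  shows "locally_power_series (\<lambda>r. \<phi> (f (p + r *\<^sub>R z)))"
  unfolding locally_power_series_def
proof
  fix r0
  define x0 where "x0 = p + r0 *\<^sub>R z"
  define D where "D = {\<alpha>::'a \<Rightarrow> nat. \<forall>i. i \<notin> Basis \<longrightarrow> \<alpha> i = 0}"
  obtain R c where R: "R > 0" "\<And>y. y \<in> ball x0 R \<Longrightarrow>
      ((\<lambda>\<alpha>. (\<Prod>b\<in>Basis. ((y - x0) \<bullet> b) ^ \<alpha> b) *\<^sub>R c \<alpha>) has_sum f y) D"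
    using assms(1) unfolding real_analytic_on_def D_def by blast
  define \<rho> where "\<rho> = R / (norm z + 1)"
  have "\<rho> > 0" unfolding \<rho>_def using R(1) by (simp add: add_nonneg_pos)
  have "((\<lambda>\<alpha>. \<tau> ^ (\<Sum>b\<in>Basis. \<alpha> b) * ((\<Prod>b\<in>Basis. (z \<bullet> b) ^ \<alpha> b) * \<phi> (c \<alpha>)))
          has_sum \<phi> (f (x0 + \<tau> *\<^sub>R z))) D" if "\<bar>\<tau>\<bar> < \<rho>" for \<tau>
  proof -
    have "\<bar>\<tau>\<bar> * norm z \<le> \<bar>\<tau>\<bar> * (norm z + 1)" by (simp add: mult_left_mono)
    also have "\<dots> < \<rho> * (norm z + 1)" using that by (intro mult_strict_right_mono) (auto simp: add_nonneg_pos)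
    also have "\<dots> = R" unfolding \<rho>_def by (simp add: add_nonneg_pos less_imp_neq[symmetric])
    finally have "x0 + \<tau> *\<^sub>R z \<in> ball x0 R" by (simp add: dist_norm)
    from has_sum_bounded_linear[OF _ R(2)[OF this], of \<phi>] assms(2)
    have "((\<lambda>\<alpha>. \<phi> ((\<Prod>b\<in>Basis. ((\<tau> *\<^sub>R z) \<bullet> b) ^ \<alpha> b) *\<^sub>R c \<alpha>)) has_sum \<phi> (f (x0 + \<tau> *\<^sub>R z))) D"
      by (simp add: linear_conv_bounded_linear)
    moreover have "(\<Prod>b\<in>Basis. ((\<tau> *\<^sub>R z) \<bullet> b) ^ \<alpha> b) = \<tau> ^ (\<Sum>b\<in>Basis. \<alpha> b) * (\<Prod>b\<in>Basis. (z \<bullet> b) ^ \<alpha> b)"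
      for \<alpha> by (simp add: power_mult_distrib prod.distrib power_sum)
    ultimately show ?thesis by (simp add: linear_scale[OF assms(2)] mult.assoc)
  qed
  then have "\<exists>a. \<forall>\<tau>. \<bar>\<tau>\<bar> < \<rho> \<longrightarrow> (\<lambda>n. a n * \<tau> ^ n) sums \<phi> (f (x0 + \<tau> *\<^sub>R z))"
    by (rule has_sum_graded_power_series[OF \<open>\<rho> > 0\<close>])
  moreover have "p + (r0 + \<tau>) *\<^sub>R z = x0 + \<tau> *\<^sub>R z" for \<tau> by (simp add: x0_def scaleR_add_left)
  ultimately show "\<exists>\<rho>>0. \<exists>a. \<forall>\<tau>. \<bar>\<tau>\<bar> < \<rho> \<longrightarrow> (\<lambda>n. a n * \<tau> ^ n) sums \<phi> (f (p + (r0 + \<tau>) *\<^sub>R z))"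
    using \<open>\<rho> > 0\<close> by auto
qed

lemma real_analytic_on_line_identity:
  fixes f :: "'a::euclidean_space \<Rightarrow> 'a" and \<phi> :: "'a \<Rightarrow> real"
  assumes "real_analytic_on f UNIV" and "linear \<phi>"
    and "\<exists>\<epsilon>>0. \<forall>r. \<bar>r\<bar> < \<epsilon> \<longrightarrow> \<phi> (f (p + r *\<^sub>R z)) = \<phi> (p + r *\<^sub>R z)"
  shows "\<phi> (f (p + r *\<^sub>R z)) = \<phi> (p + r *\<^sub>R z)"
proof -
  have "locally_power_series (\<lambda>r. \<phi> (f (p + r *\<^sub>R z)) - \<phi> (p + r *\<^sub>R z))"
    by (rule locally_power_series_diff[OF real_analytic_on_line[OF assms(1,2)]
          locally_power_series_linear_line[OF assms(2)]])
  moreover have "\<exists>\<epsilon>>0. \<forall>r. \<bar>r\<bar> < \<epsilon> \<longrightarrow> \<phi> (f (p + r *\<^sub>R z)) - \<phi> (p + r *\<^sub>R z) = 0"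
    using assms(3) by simp
  ultimately have "\<phi> (f (p + r *\<^sub>R z)) - \<phi> (p + r *\<^sub>R z) = 0"
    by (rule locally_power_series_eq_0)
  then show ?thesis by simp
qed

lemma subspace_translate_eq:
  assumes "subspace L" and coset_in: "\<And>y. y \<in> L \<Longrightarrow> w + y \<in> S"
    and in_coset: "\<And>x. x \<in> S \<Longrightarrow> w - x \<in> L" and "x \<in> S"
  shows "S = (\<lambda>y. x + y) ` L"
proof
  show "S \<subseteq> (\<lambda>y. x + y) ` L"
  proof
    fix y assume "y \<in> S"
    then have "(w - x) - (w - y) \<in> L" using assms(1) in_coset \<open>x \<in> S\<close> by (blast intro: subspace_diff)
    then show "y \<in> (\<lambda>y. x + y) ` L" by (intro image_eqI[of _ _ "(w - x) - (w - y)"]) auto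
  qed
  show "(\<lambda>y. x + y) ` L \<subseteq> S"
  proof
    fix y assume "y \<in> (\<lambda>y. x + y) ` L"
    then obtain l where "l \<in> L" "y = x + l" by blast
    then have "l - (w - x) \<in> L" using assms(1) in_coset \<open>x \<in> S\<close> by (blast intro: subspace_diff)
    then have "w + (l - (w - x)) \<in> S" by (rule coset_in)
    then show "y \<in> S" using \<open>y = x + l\<close> by (simp add: algebra_simps)
  qed
qed

context finite_max_norm
begin

lemma locked_segment_nbhd_in_S_set:
  assumes ne: "nonexpansive N f" and v: "v \<in> S_set E f" and w: "w \<in> S_set E f"
    and E: "duality_map N (v - w) = E"
  obtains \<delta> where "\<delta> > 0" "\<And>h a. h \<in> L_set E \<Longrightarrow> 0 < a \<Longrightarrow> a < 1 \<Longrightarrow> norm h < a * \<delta> \<Longrightarrow>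
      norm h < (1 - a) * \<delta> \<Longrightarrow> w + a *\<^sub>R (v - w) + h \<in> S_set E f"
proof -
  obtain \<delta> where \<delta>: "\<delta> > 0" "\<And>h a. h \<in> L_set E \<Longrightarrow> a > 0 \<Longrightarrow> norm h < a * \<delta>
     \<Longrightarrow> E \<subseteq> duality_map N (a *\<^sub>R (v - w) + h)"
    using duality_map_subset_perturb_scaled[of "v - w"] unfolding E by blast
  have "w + a *\<^sub>R (v - w) + h \<in> S_set E f"
    if h: "h \<in> L_set E" "0 < a" "a < 1" "norm h < a * \<delta>" "norm h < (1 - a) * \<delta>" for h a
  proof -
    define x where "x = w + a *\<^sub>R (v - w) + h"
    have "- h \<in> L_set E"
      using subspace_neg[OF subspace_L_set_duality_map[of N "v - w", unfolded E] h(1)] .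
    then have "E \<subseteq> duality_map N ((1 - a) *\<^sub>R (v - w) + - h)"
      by (rule \<delta>(2)) (use h in auto)
    moreover have "E \<subseteq> duality_map N (a *\<^sub>R (v - w) + h)" by (rule \<delta>(2)) (use h in auto)
    moreover have "(1 - a) *\<^sub>R (v - w) + - h = v - x" "a *\<^sub>R (v - w) + h = x - w"
      unfolding x_def by (simp_all add: algebra_simps)
    ultimately have le: "\<phi> (f v) - \<phi> (f x) \<le> \<phi> v - \<phi> x" "\<phi> (f x) - \<phi> (f w) \<le> \<phi> x - \<phi> w"
      if "\<phi> \<in> E" for \<phi>
      using that nonexpansive_duality_map_le[OF ne] by auto
    have "\<phi> (f x) = \<phi> x" if "\<phi> \<in> E" for \<phi>
    proof -
      have "\<phi> (f v) = \<phi> v" "\<phi> (f w) = \<phi> w" using v w that unfolding S_set_def by auto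
      then show ?thesis using le[OF that] by linarith
    qed
    then show ?thesis unfolding x_def[symmetric] S_set_def by blast
  qed
  then show ?thesis using that \<delta>(1) by blast
qed

lemma locked_coset_in_S_set:
  fixes f :: "'a \<Rightarrow> 'a"
  assumes ne: "nonexpansive N f" and an: "real_analytic_on f UNIV"
    and v: "v \<in> S_set E f" and w: "w \<in> S_set E f" and E: "duality_map N (v - w) = E"
    and y: "y \<in> L_set E"
  shows "w + y \<in> S_set E f"
proof -
  obtain \<delta> where \<delta>: "\<delta> > 0" "\<And>h a. h \<in> L_set E \<Longrightarrow> 0 < a \<Longrightarrow> a < 1 \<Longrightarrow> norm h < a * \<delta> \<Longrightarrow>
      norm h < (1 - a) * \<delta> \<Longrightarrow> w + a *\<^sub>R (v - w) + h \<in> S_set E f"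
    using locked_segment_nbhd_in_S_set[OF ne v w E] by blast
  have L: "subspace (L_set E)" using subspace_L_set_duality_map[of N "v - w"] unfolding E .
  define p where "p = w + (1/2) *\<^sub>R (v - w)"
  define z where "z = y - (1/2) *\<^sub>R (v - w)"
  have "v - w \<in> L_set E" using L_set_duality_map[of "v - w" N] unfolding E .
  then have z: "z \<in> L_set E" unfolding z_def by (rule subspace_diff[OF L y subspace_scale[OF L]])
  define \<epsilon> where "\<epsilon> = \<delta> / (2 * (norm z + 1))"
  have "\<epsilon> > 0" unfolding \<epsilon>_def using \<delta>(1) by (simp add: add_nonneg_pos)
  have near: "p + r *\<^sub>R z \<in> S_set E f" if "\<bar>r\<bar> < \<epsilon>" for r
  proof -
    have "\<bar>r\<bar> * norm z \<le> \<bar>r\<bar> * (norm z + 1)" by (simp add: mult_left_mono)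
    also have "\<dots> < \<epsilon> * (norm z + 1)" using that by (intro mult_strict_right_mono) (auto simp: add_nonneg_pos)
    also have "\<dots> = \<delta> / 2"
      using norm_ge_zero[of z] unfolding \<epsilon>_def by (simp add: field_simps del: norm_ge_zero)
    finally have "norm (r *\<^sub>R z) < (1/2) * \<delta>" by simp
    then show ?thesis using \<delta>(2)[of "r *\<^sub>R z" "1/2"] subspace_scale[OF L z] unfolding p_def by simp
  qed
  have "\<phi> (f (p + 1 *\<^sub>R z)) = \<phi> (p + 1 *\<^sub>R z)" if "\<phi> \<in> E" for \<phi>
  proof (rule real_analytic_on_line_identity[OF an])
    show "linear \<phi>" using that duality_map_subset_dual_ball dual_ball_linear unfolding E[symmetric] by blast
    show "\<exists>\<epsilon>>0. \<forall>r. \<bar>r\<bar> < \<epsilon> \<longrightarrow> \<phi> (f (p + r *\<^sub>R z)) = \<phi> (p + r *\<^sub>R z)"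
      using near that \<open>\<epsilon> > 0\<close> unfolding S_set_def by blast
  qed
  moreover have "p + 1 *\<^sub>R z = w + y" unfolding p_def z_def by simp
  ultimately show ?thesis unfolding S_set_def by simp
qed

lemma minimal_locked_S_set_in_coset:
  fixes f :: "'a \<Rightarrow> 'a"
  assumes ne: "nonexpansive N f" and an: "real_analytic_on f UNIV" and min: "minimal_locked N f E"
    and v: "v \<in> S_set E f" and w: "w \<in> S_set E f" and E: "duality_map N (v - w) = E"
    and x: "x \<in> S_set E f"
  shows "w - x \<in> L_set E"
proof (rule ccontr)
  assume "w - x \<notin> L_set E"
  obtain t where t: "duality_map N (t *\<^sub>R (v - w) + (w - x)) \<subseteq> E"
    using duality_map_eventually_subset[of "v - w" "w - x"] unfolding E by blast
  define E' where "E' = duality_map N (t *\<^sub>R (v - w) + (w - x))"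
  have "E' \<subset> E"
    using t duality_map_not_subset_shift[of "w - x" N "v - w" t] \<open>w - x \<notin> L_set E\<close>
    unfolding E'_def E by blast
  have "v - w \<in> L_set E" using L_set_duality_map[of "v - w" N] unfolding E .
  then have "t *\<^sub>R (v - w) \<in> L_set E"
    using subspace_scale[OF subspace_L_set_duality_map[of N "v - w", unfolded E]] by blast
  then have "w + t *\<^sub>R (v - w) \<in> S_set E f" by (rule locked_coset_in_S_set[OF ne an v w E])
  moreover have "S_set E f \<subseteq> S_set E' f" using \<open>E' \<subset> E\<close> unfolding S_set_def by blast
  moreover have "duality_map N ((w + t *\<^sub>R (v - w)) - x) = E'" unfolding E'_def by (simp add: algebra_simps)
  moreover have "E' \<subseteq> dual_ball N" unfolding E'_def by (rule duality_map_subset_dual_ball)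
  ultimately have "locked N f E'" unfolding locked_def using x by blast
  then show False using min \<open>E' \<subset> E\<close> unfolding minimal_locked_def by blast
qed

end

theorem lemma2p5:
  fixes N :: "'a::euclidean_space \<Rightarrow> real" and f :: "'a \<Rightarrow> 'a"
    and E :: "('a \<Rightarrow> real) set"
  assumes "polyhedral_norm N"
    and "nonexpansive N f"
    and "real_analytic_on f UNIV"
    and "minimal_locked N f E"
  shows "\<forall>x\<in>S_set E f. S_set E f = (\<lambda>y. x + y) ` L_set E"
proof
  fix x assume x: "x \<in> S_set E f"
  obtain \<Psi> where "finite \<Psi>" "\<Psi> \<subseteq> dual_ball N" "\<And>x. \<exists>\<psi>\<in>\<Psi>. \<psi> x = N x"
    using polyhedral_norm_finite_max[OF assms(1)] by blast
  moreover have "is_norm N" using assms(1) unfolding polyhedral_norm_def by blast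
  ultimately interpret finite_max_norm N \<Psi> by unfold_locales
  obtain v w where vw: "v \<in> S_set E f" "w \<in> S_set E f" "duality_map N (v - w) = E"
    using assms(4) unfolding minimal_locked_def locked_def by blast
  show "S_set E f = (\<lambda>y. x + y) ` L_set E"
  proof (rule subspace_translate_eq[OF _ _ _ x])
    show "subspace (L_set E)"
      using subspace_L_set_duality_map[of N "v - w"] unfolding vw(3) .
    show "w + y \<in> S_set E f" if "y \<in> L_set E" for y
      using locked_coset_in_S_set[OF assms(2,3) vw that] .
    show "w - x' \<in> L_set E" if "x' \<in> S_set E f" for x'
      using minimal_locked_S_set_in_coset[OF assms(2,3,4) vw that] .
  qed
qed

end
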